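(* Let $A\in\mathbb{R}^{n\times n}$, $C\in\mathbb{R}^{m\times n}$. The linear system $x^+=Ax$, $y=Cx$ (with $\mathcal{X}=\mathbb{R}^n$, $\mathcal{Y}=\mathbb{R}^m$) is deadbeat observable if and only if there exists an integer $p\ge1$ such that for every $x\in\mathbb{R}^n$ the set $[x]_{p-1}$ is either a singleton or empty.
   Context: For a system $x^+=f(x)$, $y=h(x)$ with $f:\mathcal{X}\to\mathcal{X}$, $h:\mathcal{X}\to\mathcal{Y}$, inverse images are set-valued: $f^{-1}(x):=\{\eta\in\mathcal{X}: f(\eta)=x\}$, $h^{-1}(y):=\{\eta:h(\eta)=y\}$; images of sets are $f(S)=\{f(s):s\in S\}$ and $[S]_k:=\bigcup_{s\in S}[s]_k$. Define $[x]_0:=h^{-1}(h(x))$, and for $k\ge0$: $[x]_k^+:=f([f^{-1}(x)]_k)$, $[x]_{k+1}:=[x]_k^+\cap[x]_0$. Here $f(x)=Ax$, $h(x)=Cx$. Solutions: $\phi(0,x)=x$, $\phi(k+1,x)=f(\phi(k,x))$. Given $g:\mathcal{X}\times\mathcal{Y}\rightrightarrows\mathcal{X}$, a solution of $\hat x^+\in g(\hat x,h(x))$ driven by $x^+=f(x)$ is any sequence $\psi(k,\hat x,x)$ with $\psi(0,\hat x,x)=\hat x$, $\psi(k+1,\hat x,x)\in g(\psi(k,\hat x,x),h(\phi(k,x)))$. The system $\hat x^+\in g(\hat x,y)$ is a deadbeat observer if there is $p\ge1$ such that all such solutions satisfy $\psi(k,\hat x,x)=\phi(k,x)$ for all $x,\hat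 x\in\mathcal{X}$ and $k\ge p$; the system is deadbeat observable if a deadbeat observer exists. *)

theory Defs
  imports "HOL-Analysis.Analysis"
begin

definition finv :: "('a \<Rightarrow> 'a) \<Rightarrow> 'a \<Rightarrow> 'a set" where
  "finv f x = {\<eta>. f \<eta> = x}"

fun eqcls :: "('a \<Rightarrow> 'a) \<Rightarrow> ('a \<Rightarrow> 'b) \<Rightarrow> nat \<Rightarrow> 'a \<Rightarrow> 'a set" where
  "eqcls f h 0 x = {\<eta>. h \<eta> = h x}"
| "eqcls f h (Suc k) x =
     f ` (\<Union>s\<in>finv f x. eqcls f h k s) \<inter> eqcls f h 0 x"

definition phi :: "('a \<Rightarrow> 'a) \<Rightarrow> nat \<Rightarrow> 'a \<Rightarrow> 'a" where
  "phi f k x = (f ^^ k) x"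

definition is_obs_solution ::
  "('a \<Rightarrow> 'a) \<Rightarrow> ('a \<Rightarrow> 'b) \<Rightarrow> ('a \<Rightarrow> 'b \<Rightarrow> 'a set) \<Rightarrow> 'a \<Rightarrow> 'a \<Rightarrow> (nat \<Rightarrow> 'a) \<Rightarrow> bool" where
  "is_obs_solution f h g xh x psi \<longleftrightarrow>
     psi 0 = xh \<and> (\<forall>k. psi (Suc k) \<in> g (psi k) (h (phi f k x)))"

text \<open>Deadbeat observer. The set-valued map g is required to have nonempty values
  (otherwise the empty map would vacuously be a deadbeat observer).\<close>
definition deadbeat_observer ::
  "('a \<Rightarrow> 'a) \<Rightarrow> ('a \<Rightarrow> 'b) \<Rightarrow> ('a \<Rightarrow> 'b \<Rightarrow> 'a set) \<Rightarrow> bool" where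
  "deadbeat_observer f h g \<longleftrightarrow>
     (\<forall>xh y. g xh y \<noteq> {}) \<and>
     (\<exists>p::nat. p \<ge> 1 \<and>
        (\<forall>x xh psi. is_obs_solution f h g xh x psi \<longrightarrow>
           (\<forall>k\<ge>p. psi k = phi f k x)))"

definition deadbeat_observable :: "('a \<Rightarrow> 'a) \<Rightarrow> ('a \<Rightarrow> 'b) \<Rightarrow> bool" where
  "deadbeat_observable f h \<longleftrightarrow> (\<exists>g. deadbeat_observer f h g)"

end

theory Submission
  imports Defs
begin

text \<open>
  Unfolding its recursive definition, z \<in> [x]_k holds exactly when there are two
  trajectories of length k, ending in x and in z, whose outputs coincide at times 0..k
  (lemma eqcls_iff_trajectories).  This holds for arbitrary f and h.

  Necessity also holds for arbitrary f and h: running a deadbeat observer with horizon p on two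
  trajectories whose first p outputs agree yields the same estimate at time p, which must be
  the true state of both; hence f^p a = f^p b, and therefore every [x]_p is contained in {x}.
  The witness for the theorem is thus p + 1.

  Sufficiency uses linearity.  Let K_j be the set of states f^j c reachable from initial states c
  whose first j outputs vanish (the part of the state that j outputs cannot reveal).  The
  hypothesis for x = 0 gives K_p = {0}.  The observer keeps its estimation error in K_j with
  j as large as possible (at most p): it picks a state consistent with the current output
  whose difference to the estimate lies in the deepest possible K_j, and propagates it
  through f.  The error then moves from K_j into K_(j+1), so after p steps it is zero.
\<close>

lemma eqcls_iff_trajectories:
  "z \<in> eqcls f h k x \<longleftrightarrow> (\<exists>a b. (f^^k) a = x \<and> (f^^k) b = z \<and>
      (\<forall>i\<le>k. h ((f^^i) a) = h ((f^^i) b)))"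
proof (induction k arbitrary: x z)
  case 0
  then show ?case by auto
next
  case (Suc k)
  show ?case
  proof
    assume "z \<in> eqcls f h (Suc k) x"
    then obtain s w where s: "f s = x" and w: "w \<in> eqcls f h k s" and fw: "f w = z"
      and hz: "h z = h x"
      by (auto simp: finv_def)
    from w Suc.IH obtain a b where ab: "(f^^k) a = s" "(f^^k) b = w"
      "\<forall>i\<le>k. h ((f^^i) a) = h ((f^^i) b)" by blast
    have "h ((f^^i) a) = h ((f^^i) b)" if "i \<le> Suc k" for i
      using that ab s fw hz by (cases "i = Suc k") auto
    with ab s fw show "\<exists>a b. (f^^Suc k) a = x \<and> (f^^Suc k) b = z \<and>
      (\<forall>i\<le>Suc k. h ((f^^i) a) = h ((f^^i) b))" by auto
  next
    assume "\<exists>a b. (f^^Suc k) a = x \<and> (f^^Suc k) b = z \<and>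
      (\<forall>i\<le>Suc k. h ((f^^i) a) = h ((f^^i) b))"
    then obtain a b where ab: "(f^^Suc k) a = x" "(f^^Suc k) b = z"
      "\<forall>i\<le>Suc k. h ((f^^i) a) = h ((f^^i) b)" by blast
    have "(f^^k) b \<in> eqcls f h k ((f^^k) a)"
      unfolding Suc.IH using ab(3) le_Suc_eq by blast
    moreover have "h z = h x" using ab(3)[rule_format, of "Suc k"] ab by simp
    ultimately show "z \<in> eqcls f h (Suc k) x"
      using ab by (auto simp: finv_def)
  qed
qed

fun greedy_solution :: "('a \<Rightarrow> 'b \<Rightarrow> 'a set) \<Rightarrow> (nat \<Rightarrow> 'b) \<Rightarrow> 'a \<Rightarrow> nat \<Rightarrow> 'a" where
  "greedy_solution g y xh 0 = xh"
| "greedy_solution g y xh (Suc k) = (SOME w. w \<in> g (greedy_solution g y xh k) (y k))"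

lemma greedy_solution_is_solution:
  assumes "\<forall>xh y. g xh y \<noteq> {}"
  shows "is_obs_solution f h g xh x (greedy_solution g (\<lambda>k. h (phi f k x)) xh)"
  unfolding is_obs_solution_def using assms by (simp add: some_in_eq)

lemma greedy_solution_causal:
  assumes "\<forall>i<n. y i = y' i" and "k \<le> n"
  shows "greedy_solution g y xh k = greedy_solution g y' xh k"
  using assms by (induction k) auto

text \<open>A deadbeat observer with horizon p cannot tell apart trajectories whose first p outputs
  agree, and it must reproduce both at time p; hence the p-th states coincide.\<close>

lemma deadbeat_observable_outputs_determine_state:
  assumes "deadbeat_observable f h"
  obtains p where "\<And>a b. \<forall>i<p. h ((f^^i) a) = h ((f^^i) b) \<Longrightarrow> (f^^p) a = (f^^p) b"
proof -
  obtain g p where nonempty: "\<forall>xh y. g xh y \<noteq> {}"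
    and deadbeat: "\<And>x xh psi k. is_obs_solution f h g xh x psi \<Longrightarrow> k \<ge> p \<Longrightarrow> psi k = phi f k x"
    using assms unfolding deadbeat_observable_def deadbeat_observer_def by blast
  have "(f^^p) a = (f^^p) b" if same: "\<forall>i<p. h ((f^^i) a) = h ((f^^i) b)" for a b
  proof -
    let ?ya = "\<lambda>k. h (phi f k a)" and ?yb = "\<lambda>k. h (phi f k b)"
    have "phi f p a = greedy_solution g ?ya a p"
      using deadbeat[OF greedy_solution_is_solution[OF nonempty]] by simp
    also have "\<dots> = greedy_solution g ?yb a p"
      using same by (intro greedy_solution_causal) (auto simp: phi_def)
    also have "\<dots> = phi f p b"
      using deadbeat[OF greedy_solution_is_solution[OF nonempty]] by simp
    finally show ?thesis by (simp add: phi_def)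
  qed
  then show thesis using that by blast
qed

lemma eqcls_subset_singleton:
  assumes "\<And>a b. \<forall>i<p. h ((f^^i) a) = h ((f^^i) b) \<Longrightarrow> (f^^p) a = (f^^p) b"
  shows "eqcls f h p x \<subseteq> {x}"
  using assms by (force simp: eqcls_iff_trajectories)

lemma deadbeat_observable_imp_eqcls_subsingleton:
  assumes "deadbeat_observable f h"
  shows "\<exists>p::nat. p \<ge> 1 \<and> (\<forall>x. (\<exists>z. eqcls f h (p - 1) x = {z}) \<or> eqcls f h (p - 1) x = {})"
proof -
  obtain p where "\<And>a b. \<forall>i<p. h ((f^^i) a) = h ((f^^i) b) \<Longrightarrow> (f^^p) a = (f^^p) b"
    using deadbeat_observable_outputs_determine_state[OF assms] by blast
  then have "eqcls f h p x = {} \<or> eqcls f h p x = {x}" for x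
    using eqcls_subset_singleton subset_singletonD by metis
  then have "\<forall>x. (\<exists>z. eqcls f h p x = {z}) \<or> eqcls f h p x = {}" by blast
  then show ?thesis by (intro exI[of _ "Suc p"]) simp
qed

text \<open>K_j: the states reachable in j steps from initial states whose first j outputs
  vanish, i.e. the uncertainty left after observing j outputs of a linear system.\<close>

definition unobs_reach :: "('a \<Rightarrow> 'a) \<Rightarrow> ('a \<Rightarrow> 'b::zero) \<Rightarrow> nat \<Rightarrow> 'a set" where
  "unobs_reach f h j = (f^^j) ` {c. \<forall>i<j. h ((f^^i) c) = 0}"

lemma unobs_reach_0 [simp]: "unobs_reach f h 0 = UNIV"
  by (simp add: unobs_reach_def)

lemma unobs_reach_step:
  assumes "d \<in> unobs_reach f h j" and "h d = 0"
  shows "f d \<in> unobs_reach f h (Suc j)"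
proof -
  obtain c where "d = (f^^j) c" and "\<forall>i<j. h ((f^^i) c) = 0"
    using assms(1) by (auto simp: unobs_reach_def)
  with assms(2) have "f d = (f^^Suc j) c" and "\<forall>i<Suc j. h ((f^^i) c) = 0"
    by (auto simp: less_Suc_eq)
  then show ?thesis by (auto simp: unobs_reach_def)
qed

lemma unobs_reach_antimono:
  assumes "i \<le> j"
  shows "unobs_reach f h j \<subseteq> unobs_reach f h i"
proof -
  have "unobs_reach f h (Suc j) \<subseteq> unobs_reach f h j" for j
  proof
    fix d assume "d \<in> unobs_reach f h (Suc j)"
    then obtain c where c: "d = (f^^Suc j) c" "\<forall>i<Suc j. h ((f^^i) c) = 0"
      by (auto simp: unobs_reach_def)
    have shift: "(f^^i) (f c) = (f^^Suc i) c" for i by (metis comp_apply funpow_Suc_right)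
    have "h ((f^^i) (f c)) = 0" if "i < j" for i
      using c(2)[rule_format, of "Suc i"] that unfolding shift by simp
    moreover have "d = (f^^j) (f c)" using c(1) shift by simp
    ultimately show "d \<in> unobs_reach f h j" unfolding unobs_reach_def by blast
  qed
  then show ?thesis using lift_Suc_antimono_le[of "unobs_reach f h"] assms by blast
qed

lemma linear_funpow:
  fixes f :: "'a::real_vector \<Rightarrow> 'a"
  assumes "linear f"
  shows "linear (f ^^ i)"
proof (induction i)
  case 0
  show ?case by (simp add: linear_iff)
next
  case (Suc i)
  show ?case using linear_compose[OF Suc.IH assms] by (simp add: o_def)
qed

text \<open>For linear f and h, K_j is a linear subspace (the image of an intersection of kernels).\<close>

lemma subspace_unobs_reach:
  fixes f :: "'a::real_vector \<Rightarrow> 'a" and h :: "'a \<Rightarrow> 'b::real_vector"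
  assumes "linear f" and "linear h"
  shows "subspace (unobs_reach f h j)"
proof -
  have "linear (\<lambda>c. h ((f^^i) c))" for i
    using linear_compose[OF linear_funpow[OF assms(1)] assms(2)] by (simp add: o_def)
  then have "subspace {c. h ((f^^i) c) = 0}" for i
    using linear_subspace_kernel by blast
  then have "subspace (\<Inter>i<j. {c. h ((f^^i) c) = 0})"
    by (intro subspace_Inter) blast
  moreover have "(\<Inter>i<j. {c. h ((f^^i) c) = 0}) = {c. \<forall>i<j. h ((f^^i) c) = 0}"
    by auto
  ultimately have "subspace {c. \<forall>i<j. h ((f^^i) c) = 0}" by simp
  then show ?thesis
    unfolding unobs_reach_def using assms(1) linear_funpow linear_subspace_image by blast
qed

text \<open>For linear systems the hypothesis of the theorem at x = 0 forces K_p = {0}: an element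
  f^p c of K_p arises from f^(p-1) c \<in> [0]_(p-1) = {0}.\<close>

lemma unobs_reach_trivial:
  fixes f :: "'a::real_vector \<Rightarrow> 'a" and h :: "'a \<Rightarrow> 'b::real_vector"
  assumes "linear f" and "linear h" and "p \<ge> 1"
    and subsingleton: "(\<exists>z. eqcls f h (p - 1) 0 = {z}) \<or> eqcls f h (p - 1) 0 = {}"
  shows "unobs_reach f h p \<subseteq> {0}"
proof
  fix d assume "d \<in> unobs_reach f h p"
  then obtain c where d: "d = (f^^p) c" and silent: "\<forall>i<p. h ((f^^i) c) = 0"
    by (auto simp: unobs_reach_def)
  have zero_traj: "(f^^i) 0 = 0" for i
    using linear_0[OF linear_funpow[OF assms(1)]] .
  have "0 \<in> eqcls f h (p - 1) 0"
    unfolding eqcls_iff_trajectories using zero_traj by blast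
  moreover have "(f^^(p - 1)) c \<in> eqcls f h (p - 1) 0"
    unfolding eqcls_iff_trajectories
    using zero_traj silent linear_0[OF assms(2)] \<open>p \<ge> 1\<close>
    by (intro exI[of _ 0] exI[of _ c]) auto
  ultimately have "(f^^(p - 1)) c = 0" using subsingleton by auto
  moreover have "d = f ((f^^(p - 1)) c)"
    using d \<open>p \<ge> 1\<close> by (cases p) auto
  ultimately show "d \<in> {0}" using linear_0[OF assms(1)] by simp
qed

definition error_depth :: "('a \<Rightarrow> 'a) \<Rightarrow> ('a \<Rightarrow> 'b::zero) \<Rightarrow> nat \<Rightarrow> 'a::ab_group_add \<Rightarrow> 'b \<Rightarrow> nat" where
  "error_depth f h p xh y = (GREATEST j. j \<le> p \<and> (\<exists>z. h z = y \<and> z - xh \<in> unobs_reach f h j))"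

text \<open>The observer: propagate through f a state consistent with the output y whose deviation
  from the estimate lies in the deepest possible K_j.  (Outputs outside the range of h never
  occur along true trajectories; the value {xh} only keeps the map nonempty.)\<close>

definition unobs_observer :: "('a \<Rightarrow> 'a) \<Rightarrow> ('a \<Rightarrow> 'b::zero) \<Rightarrow> nat \<Rightarrow> 'a::ab_group_add \<Rightarrow> 'b \<Rightarrow> 'a set" where
  "unobs_observer f h p xh y =
     (if \<exists>z. h z = y
      then f ` {z. h z = y \<and> z - xh \<in> unobs_reach f h (error_depth f h p xh y)}
      else {xh})"

lemma error_depth:
  assumes "j \<le> p" and "h z = y" and "z - xh \<in> unobs_reach f h j"
  shows "j \<le> error_depth f h p xh y"
    and "\<exists>z. h z = y \<and> z - xh \<in> unobs_reach f h (error_depth f h p xh y)"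
proof -
  let ?P = "\<lambda>j. j \<le> p \<and> (\<exists>z. h z = y \<and> z - xh \<in> unobs_reach f h j)"
  have "?P j" using assms by blast
  then show "j \<le> error_depth f h p xh y"
    unfolding error_depth_def by (rule Greatest_le_nat[of _ j p]) blast
  from \<open>?P j\<close> have "?P (error_depth f h p xh y)"
    unfolding error_depth_def by (rule GreatestI_nat[of _ j p]) blast
  then show "\<exists>z. h z = y \<and> z - xh \<in> unobs_reach f h (error_depth f h p xh y)" by blast
qed

text \<open>Since K_0 is everything, the observer always has a successor.\<close>

lemma unobs_observer_nonempty: "unobs_observer f h p xh y \<noteq> {}"
  using error_depth(2)[of 0 p h _ y xh f] by (auto simp: unobs_observer_def)

lemma unobs_observer_error_step:
  fixes f :: "'a::real_vector \<Rightarrow> 'a" and h :: "'a \<Rightarrow> 'b::real_vector"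
  assumes "linear f" and "linear h" and "j \<le> p"
    and err: "xh - x \<in> unobs_reach f h j" and w: "w \<in> unobs_observer f h p xh (h x)"
  shows "w - f x \<in> unobs_reach f h (Suc j)"
proof -
  let ?K = "unobs_reach f h"
  have sub: "subspace (?K i)" for i using subspace_unobs_reach[OF assms(1,2)] .
  have "x - xh \<in> ?K j" using subspace_neg[OF sub err] by simp
  then have deeper: "j \<le> error_depth f h p xh (h x)"
    using error_depth(1)[OF \<open>j \<le> p\<close>] by blast
  have "\<exists>z. h z = h x" by blast
  then obtain z where w_def: "w = f z" and "h z = h x"
    and "z - xh \<in> ?K (error_depth f h p xh (h x))"
    using w by (auto simp: unobs_observer_def)
  then have "z - xh \<in> ?K j" using unobs_reach_antimono[OF deeper, of f h] by blast
  then have "(z - xh) + (xh - x) \<in> ?K j" using subspace_add[OF sub _ err] by blast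
  moreover have "h (z - x) = 0" using \<open>h z = h x\<close> linear_diff[OF assms(2)] by simp
  ultimately have "f (z - x) \<in> ?K (Suc j)" using unobs_reach_step by simp
  then show ?thesis using w_def linear_diff[OF assms(1)] by simp
qed

lemma unobs_observer_error:
  fixes f :: "'a::real_vector \<Rightarrow> 'a" and h :: "'a \<Rightarrow> 'b::real_vector"
  assumes "linear f" and "linear h"
    and sol: "is_obs_solution f h (unobs_observer f h p) xh x psi"
  shows "psi k - phi f k x \<in> unobs_reach f h (min k p)"
proof (induction k)
  case 0
  show ?case by simp
next
  case (Suc k)
  have "psi (Suc k) \<in> unobs_observer f h p (psi k) (h (phi f k x))"
    using sol by (simp add: is_obs_solution_def)
  then have "psi (Suc k) - f (phi f k x) \<in> unobs_reach f h (Suc (min k p))"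
    by (rule unobs_observer_error_step[OF assms(1,2) min.cobounded2 Suc.IH])
  moreover have "unobs_reach f h (Suc (min k p)) \<subseteq> unobs_reach f h (min (Suc k) p)"
    by (rule unobs_reach_antimono) simp
  ultimately show ?case by (auto simp: phi_def)
qed

lemma unobs_observer_deadbeat:
  fixes f :: "'a::real_vector \<Rightarrow> 'a" and h :: "'a \<Rightarrow> 'b::real_vector"
  assumes "linear f" and "linear h" and "p \<ge> 1" and trivial: "unobs_reach f h p \<subseteq> {0}"
  shows "deadbeat_observer f h (unobs_observer f h p)"
  unfolding deadbeat_observer_def
proof (intro conjI allI exI[of _ p] impI \<open>p \<ge> 1\<close> unobs_observer_nonempty)
  fix x xh psi k
  assume "is_obs_solution f h (unobs_observer f h p) xh x psi" and "p \<le> k"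
  then have "psi k - phi f k x \<in> unobs_reach f h p"
    using unobs_observer_error[OF assms(1,2)] by (metis min.absorb2)
  then show "psi k = phi f k x" using trivial by auto
qed

theorem theorem1:
  fixes A :: "real ^ 'n ^ 'n" and C :: "real ^ 'n ^ 'm"
  shows "deadbeat_observable (\<lambda>x. A *v x) (\<lambda>x. C *v x) \<longleftrightarrow>
    (\<exists>p::nat. p \<ge> 1 \<and>
       (\<forall>x :: real ^ 'n.
          (\<exists>z. eqcls (\<lambda>x. A *v x) (\<lambda>x. C *v x) (p - 1) x = {z}) \<or>
          eqcls (\<lambda>x. A *v x) (\<lambda>x. C *v x) (p - 1) x = {}))"
    (is "deadbeat_observable ?f ?h \<longleftrightarrow> _")
proof
  assume "deadbeat_observable ?f ?h"
  then show "\<exists>p::nat. p \<ge> 1 \<and> (\<forall>x. (\<exists>z. eqcls ?f ?h (p - 1) x = {z}) \<or> eqcls ?f ?h (p - 1) x = {})"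
    by (rule deadbeat_observable_imp_eqcls_subsingleton)
next
  assume "\<exists>p::nat. p \<ge> 1 \<and> (\<forall>x. (\<exists>z. eqcls ?f ?h (p - 1) x = {z}) \<or> eqcls ?f ?h (p - 1) x = {})"
  then obtain p where "p \<ge> 1"
    and "(\<exists>z. eqcls ?f ?h (p - 1) 0 = {z}) \<or> eqcls ?f ?h (p - 1) 0 = {}" by blast
  then have "unobs_reach ?f ?h p \<subseteq> {0}"
    by (intro unobs_reach_trivial) auto
  then have "deadbeat_observer ?f ?h (unobs_observer ?f ?h p)"
    using \<open>p \<ge> 1\<close> by (intro unobs_observer_deadbeat) auto
  then show "deadbeat_observable ?f ?h"
    unfolding deadbeat_observable_def by blast
qed

end
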